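(* Let $H$ be a subgroup of $\mathbb{Z}^\omega$ of countably infinite rank. Then there exist a group endomorphism $f$ of $\mathbb{Z}^\omega$ and positive integers $(d_n)_{n\in\omega}$ such that $f(H)$ contains the subgroup $\bigoplus_{n\in\omega} d_n\mathbb{Z}\,e_n$ of $\mathbb{Z}^{(\omega)}$, i.e. $d_ne_n\in f(H)$ for every $n\in\omega$.
   Context: $\mathbb{Z}^{\omega}$ is the product of countably many copies of $\mathbb{Z}$; $\mathbb{Z}^{(\omega)}\subseteq\mathbb{Z}^\omega$ is the subgroup of finitely supported sequences; $e_n\in\mathbb{Z}^{(\omega)}$ is the $n$-th standard unit vector. Rank means torsion-free rank. *)

theory Defs
  imports Main "HOL-Library.Countable_Set"
begin

definition subgroup_Zw :: "(nat \<Rightarrow> int) set \<Rightarrow> bool" where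
  "subgroup_Zw H \<longleftrightarrow> (\<lambda>_. 0) \<in> H \<and>
     (\<forall>x\<in>H. \<forall>y\<in>H. (\<lambda>n. x n + y n) \<in> H) \<and>
     (\<forall>x\<in>H. (\<lambda>n. - x n) \<in> H)"

definition endo_Zw :: "((nat \<Rightarrow> int) \<Rightarrow> (nat \<Rightarrow> int)) \<Rightarrow> bool" where
  "endo_Zw f \<longleftrightarrow> (\<forall>x y. f (\<lambda>n. x n + y n) = (\<lambda>n. f x n + f y n))"

definition Z_independent :: "(nat \<Rightarrow> int) set \<Rightarrow> bool" where
  "Z_independent S \<longleftrightarrow> (\<forall>T c. finite T \<and> T \<subseteq> S \<and>
      (\<forall>n. (\<Sum>x\<in>T. c x * x n) = 0) \<longrightarrow> (\<forall>x\<in>T. c x = 0))"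

definition countably_infinite_rank :: "(nat \<Rightarrow> int) set \<Rightarrow> bool" where
  "countably_infinite_rank H \<longleftrightarrow>
     (\<exists>S\<subseteq>H. infinite S \<and> Z_independent S) \<and>
     (\<forall>S\<subseteq>H. Z_independent S \<longrightarrow> countable S)"

definition unit_vec :: "nat \<Rightarrow> nat \<Rightarrow> int" ("e") where
  "unit_vec n = (\<lambda>m. if m = n then 1 else 0)"

end

theory Submission
  imports Defs "HOL.Modules" "HOL-Library.Function_Algebras"
begin

(* We build inductively h_n in H and additive maps p_n : Z^omega -> Z with p_i (h_j) = 0 for
   i ~= j and p_n (h_n) > 0; then f x = (p_n x)_n maps h_n to p_n (h_n) e_n.
   In the inductive step, n + 1 independent elements of H have a nontrivial integer
   combination h killed by p_0, ..., p_(n-1) (n homogeneous equations in n + 1 unknowns).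
   Since h ~= 0, some coordinate functional is nonzero on h, and correcting it by multiples of
   the p_i gives a functional vanishing on h_0, ..., h_(n-1) but not on h. *)

(* Gaussian elimination of the unknown x0 by means of equation n. *)
lemma homogeneous_system_pivot_step:
  fixes v :: "'a \<Rightarrow> nat \<Rightarrow> 'r::idom"
  assumes T: "finite T" "x0 \<in> T" and pivot: "v x0 n \<noteq> 0"
    and nontrivial: "\<exists>x\<in>T - {x0}. c x \<noteq> 0"
    and solves: "\<forall>k<n. (\<Sum>x\<in>T - {x0}. c x * (v x0 n * v x k - v x n * v x0 k)) = 0"
  shows "\<exists>c. (\<exists>x\<in>T. c x \<noteq> 0) \<and> (\<forall>k<Suc n. (\<Sum>x\<in>T. c x * v x k) = 0)"
proof -
  define c' where "c' x = (if x = x0 then - (\<Sum>y\<in>T - {x0}. c y * v y n) else v x0 n * c x)" for x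
  have eliminated: "(\<Sum>x\<in>T. c' x * v x k) = (\<Sum>x\<in>T - {x0}. c x * (v x0 n * v x k - v x n * v x0 k))"
    for k
  proof -
    have "(\<Sum>x\<in>T. c' x * v x k) = c' x0 * v x0 k + (\<Sum>x\<in>T - {x0}. c' x * v x k)"
      using T by (intro sum.remove)
    also have "(\<Sum>x\<in>T - {x0}. c' x * v x k) = (\<Sum>x\<in>T - {x0}. v x0 n * c x * v x k)"
      by (rule sum.cong) (auto simp: c'_def)
    finally show ?thesis
      by (simp add: c'_def algebra_simps sum_subtractf sum_distrib_left sum_distrib_right)
  qed
  have "\<exists>x\<in>T. c' x \<noteq> 0"
    using nontrivial pivot by (auto simp: c'_def)
  moreover have "(\<Sum>x\<in>T. c' x * v x k) = 0" if "k < Suc n" for k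
    using that solves unfolding eliminated by (auto simp: less_Suc_eq)
  ultimately show ?thesis by blast
qed

lemma underdetermined_homogeneous_system_nontrivial_solution:
  fixes v :: "'a \<Rightarrow> nat \<Rightarrow> 'r::idom"
  assumes "finite T" "n < card T"
  shows "\<exists>c. (\<exists>x\<in>T. c x \<noteq> 0) \<and> (\<forall>k<n. (\<Sum>x\<in>T. c x * v x k) = 0)"
  using assms
proof (induction n arbitrary: T v)
  case 0
  then show ?case by (intro exI[of _ "\<lambda>_. 1"]) (auto simp: card_gt_0_iff)
next
  case (Suc n)
  show ?case
  proof (cases "\<exists>x0\<in>T. v x0 n \<noteq> 0")
    case True
    then obtain x0 where x0: "x0 \<in> T" "v x0 n \<noteq> 0" by blast
    have "n < card (T - {x0})"
      using Suc.prems x0(1) by simp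
    with Suc.IH[of "T - {x0}" "\<lambda>x k. v x0 n * v x k - v x n * v x0 k"] Suc.prems(1)
    obtain c where "\<exists>x\<in>T - {x0}. c x \<noteq> 0"
      "\<forall>k<n. (\<Sum>x\<in>T - {x0}. c x * (v x0 n * v x k - v x n * v x0 k)) = 0"
      by auto
    with homogeneous_system_pivot_step[where v = v, OF Suc.prems(1) x0] show ?thesis by blast
  next
    case False
    from Suc.IH[of T v] Suc.prems obtain c where
      "\<exists>x\<in>T. c x \<noteq> 0" "\<forall>k<n. (\<Sum>x\<in>T. c x * v x k) = 0"
      by auto
    with False show ?thesis by (auto simp: less_Suc_eq)
  qed
qed

lemma sequence_by_extension:
  assumes local: "\<And>n f g. (\<And>i. i < n \<Longrightarrow> f i = g i) \<Longrightarrow> P n f \<Longrightarrow> P n g"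
    and start: "P 0 f0"
    and extend: "\<And>n f. P n f \<Longrightarrow> \<exists>y. P (Suc n) (f(n := y))"
  shows "\<exists>f. \<forall>n. P n f"
proof -
  have "\<exists>F. \<forall>n. P n (F n) \<and> (\<exists>y. F (Suc n) = (F n)(n := y))"
    by (rule dependent_nat_choice) (use start extend in blast)+
  then obtain F where F: "\<And>n. P n (F n)" "\<And>n. \<exists>y. F (Suc n) = (F n)(n := y)"
    by blast
  define f where "f i = F (Suc i) i" for i
  have "F m i = f i" if "i < m" for i m
    using that
  proof (induction m)
    case (Suc m)
    from F(2) obtain y where "F (Suc m) = (F m)(m := y)" by blast
    with Suc show ?case by (cases "i = m") (auto simp: f_def)
  qed simp
  then have "P n f" for n
    using local F(1) by blast
  then show ?thesis by blast
qed

locale torsionless_module = module scale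
  for scale :: "'a::linordered_idom \<Rightarrow> 'b::ab_group_add \<Rightarrow> 'b" (infixr \<open>*s\<close> 75) +
  assumes functionals_separate: "x \<noteq> 0 \<Longrightarrow> \<exists>\<phi>. module_hom scale (*) \<phi> \<and> \<phi> x \<noteq> 0"
begin

sublocale dual: module_pair scale "(*)"
  by unfold_locales (auto simp: algebra_simps)

definition biorthogonal_upto :: "'b set \<Rightarrow> nat \<Rightarrow> (nat \<Rightarrow> 'b) \<Rightarrow> (nat \<Rightarrow> 'b \<Rightarrow> 'a) \<Rightarrow> bool"
  where "biorthogonal_upto H n h \<phi> \<longleftrightarrow> (\<forall>i<n. h i \<in> H \<and> module_hom scale (*) (\<phi> i) \<and>
     \<phi> i (h i) > 0 \<and> (\<forall>j<n. j \<noteq> i \<longrightarrow> \<phi> i (h j) = 0))"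

lemma nonzero_in_common_kernel:
  fixes n :: nat
  assumes H: "subspace H" and S: "S \<subseteq> H" "infinite S" "independent S"
    and \<phi>: "\<And>i. i < n \<Longrightarrow> module_hom scale (*) (\<phi> i)"
  shows "\<exists>y\<in>H. y \<noteq> 0 \<and> (\<forall>i<n. \<phi> i y = 0)"
proof -
  obtain T where T: "finite T" "card T = Suc n" "T \<subseteq> S"
    using infinite_arbitrarily_large[OF S(2)] by blast
  then obtain c where c: "\<exists>x\<in>T. c x \<noteq> 0" "\<forall>i<n. (\<Sum>x\<in>T. c x * \<phi> i x) = 0"
    using underdetermined_homogeneous_system_nontrivial_solution[OF T(1), of n "\<lambda>x i. \<phi> i x"]
    by auto
  define y where "y = (\<Sum>x\<in>T. c x *s x)"
  have "y \<in> H"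
    unfolding y_def using H S(1) T(3) by (intro subspace_sum subspace_scale) auto
  moreover have "y \<noteq> 0"
    using c(1) independentD[OF S(3) T(1,3)] by (auto simp: y_def)
  moreover have "\<phi> i y = 0" if "i < n" for i
  proof -
    interpret \<phi>: module_hom scale "(*)" "\<phi> i" using \<phi> that .
    show ?thesis using c(2) that by (simp add: y_def \<phi>.sum \<phi>.scale)
  qed
  ultimately show ?thesis by blast
qed

lemma exists_functional_annihilating:
  assumes bi: "biorthogonal_upto H n h \<phi>" and y: "\<And>i. i < n \<Longrightarrow> \<phi> i y = 0"
    and \<chi>: "module_hom scale (*) \<chi>" "\<chi> y \<noteq> 0"
  shows "\<exists>q. module_hom scale (*) q \<and> q y \<noteq> 0 \<and> (\<forall>j<n. q (h j) = 0)"
proof -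
  have \<phi>: "module_hom scale (*) (\<phi> i)" "\<phi> i (h i) > 0"
      "\<And>j. j < n \<Longrightarrow> j \<noteq> i \<Longrightarrow> \<phi> i (h j) = 0" if "i < n" for i
    using bi that unfolding biorthogonal_upto_def by auto
  define D where "D = (\<Prod>i<n. \<phi> i (h i))"
  define D' where "D' i = (\<Prod>j\<in>{..<n} - {i}. \<phi> j (h j))" for i
  \<comment> \<open>Since D' i * \<phi> i (h i) = D, subtracting multiples of D' i * \<phi> i corrects D * \<chi>
    on each h i without dividing by \<phi> i (h i).\<close>
  define q where "q x = D * \<chi> x - (\<Sum>i<n. D' i * \<chi> (h i) * \<phi> i x)" for x
  have q: "module_hom scale (*) q"
  proof -
    have "module_hom scale (*) (\<lambda>x. \<Sum>i<n. D' i * \<chi> (h i) * \<phi> i x)"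
      using dual.module_hom_scale[OF \<phi>(1)] module_axioms dual.m2.module_axioms
      by (intro dual.module_hom_sum) auto
    then show ?thesis
      unfolding q_def using dual.module_hom_sub dual.module_hom_scale[OF \<chi>(1)] by blast
  qed
  have "q (h j) = 0" if "j < n" for j
  proof -
    have "(\<Sum>i<n. D' i * \<chi> (h i) * \<phi> i (h j))
        = D' j * \<chi> (h j) * \<phi> j (h j) + (\<Sum>i\<in>{..<n} - {j}. D' i * \<chi> (h i) * \<phi> i (h j))"
      using that by (intro sum.remove) auto
    also have "(\<Sum>i\<in>{..<n} - {j}. D' i * \<chi> (h i) * \<phi> i (h j)) = 0"
      using that \<phi>(3) by (intro sum.neutral) auto
    also have "D' j * \<chi> (h j) * \<phi> j (h j) + 0 = D * \<chi> (h j)"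
    proof -
      have "D = \<phi> j (h j) * D' j"
        unfolding D_def D'_def using that by (intro prod.remove) auto
      then show ?thesis by (metis add_0_right mult.commute mult.left_commute)
    qed
    finally show ?thesis
      by (simp add: q_def)
  qed
  moreover have "q y \<noteq> 0"
  proof -
    have "D > 0"
      unfolding D_def using \<phi>(2) by (intro prod_pos) auto
    then show ?thesis
      using \<chi>(2) y by (simp add: q_def)
  qed
  ultimately show ?thesis
    using q by blast
qed

lemma exists_positive_functional_annihilating:
  assumes bi: "biorthogonal_upto H n h \<phi>" and "y \<noteq> 0" and y: "\<And>i. i < n \<Longrightarrow> \<phi> i y = 0"
  shows "\<exists>\<psi>. module_hom scale (*) \<psi> \<and> \<psi> y > 0 \<and> (\<forall>j<n. \<psi> (h j) = 0)"
proof -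
  obtain \<chi> where "module_hom scale (*) \<chi>" "\<chi> y \<noteq> 0"
    using functionals_separate \<open>y \<noteq> 0\<close> by blast
  then obtain q where q: "module_hom scale (*) q" "q y \<noteq> 0" "\<forall>j<n. q (h j) = 0"
    using exists_functional_annihilating[OF bi y] by blast
  have "module_hom scale (*) (\<lambda>x. q y * q x)"
    using dual.module_hom_scale[OF q(1)] .
  with q show ?thesis
    by (intro exI[of _ "\<lambda>x. q y * q x"]) (auto simp: zero_less_mult_iff)
qed

lemma biorthogonal_upto_extend:
  assumes "subspace H" "S \<subseteq> H" "infinite S" "independent S"
    and bi: "biorthogonal_upto H n h \<phi>"
  shows "\<exists>y \<psi>. biorthogonal_upto H (Suc n) (h(n := y)) (\<phi>(n := \<psi>))"
proof -
  obtain y where y: "y \<in> H" "y \<noteq> 0" "\<And>i. i < n \<Longrightarrow> \<phi> i y = 0"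
    using nonzero_in_common_kernel[OF assms(1-4), of n \<phi>] bi
    unfolding biorthogonal_upto_def by blast
  obtain \<psi> where "module_hom scale (*) \<psi>" "\<psi> y > 0" "\<And>j. j < n \<Longrightarrow> \<psi> (h j) = 0"
    using exists_positive_functional_annihilating[OF bi y(2,3)] by blast
  with y bi have "biorthogonal_upto H (Suc n) (h(n := y)) (\<phi>(n := \<psi>))"
    unfolding biorthogonal_upto_def by (auto simp: less_Suc_eq)
  then show ?thesis by blast
qed

lemma biorthogonal_sequence_exists:
  assumes "subspace H" "S \<subseteq> H" "infinite S" "independent S"
  shows "\<exists>h \<phi>. \<forall>n. biorthogonal_upto H n h \<phi>"
proof -
  let ?P = "\<lambda>n s. biorthogonal_upto H n (fst \<circ> s) (snd \<circ> s)"
  have "\<exists>s. \<forall>n. ?P n s"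
  proof (rule sequence_by_extension)
    show "?P n s'" if "\<And>i. i < n \<Longrightarrow> s i = s' i" "?P n s" for n s s'
      using that unfolding biorthogonal_upto_def by auto
    show "?P 0 s" for s
      by (simp add: biorthogonal_upto_def)
    show "\<exists>y. ?P (Suc n) (s(n := y))" if "?P n s" for n s
      using biorthogonal_upto_extend[OF assms that] by (auto simp: fun_upd_comp)
  qed
  then show ?thesis by blast
qed

end

definition scale_Zw :: "int \<Rightarrow> (nat \<Rightarrow> int) \<Rightarrow> nat \<Rightarrow> int"
  where "scale_Zw c x = (\<lambda>n. c * x n)"

interpretation Zw: torsionless_module scale_Zw
proof
  fix x :: "nat \<Rightarrow> int"
  assume "x \<noteq> 0"
  then obtain k where "x k \<noteq> 0" by (auto simp: fun_eq_iff)
  moreover have "module_hom scale_Zw (*) (\<lambda>x. x k)"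
    by unfold_locales (simp_all add: scale_Zw_def fun_eq_iff algebra_simps)
  ultimately show "\<exists>\<phi>. module_hom scale_Zw (*) \<phi> \<and> \<phi> x \<noteq> 0"
    by blast
qed (simp_all add: scale_Zw_def fun_eq_iff algebra_simps)

lemma subgroup_Zw_iff:
  "subgroup_Zw H \<longleftrightarrow> 0 \<in> H \<and> (\<forall>x\<in>H. \<forall>y\<in>H. x + y \<in> H) \<and> (\<forall>x\<in>H. - x \<in> H)"
  by (simp add: subgroup_Zw_def zero_fun_def plus_fun_def fun_Compl_def)

lemma subgroup_Zw_scale:
  assumes "subgroup_Zw H" and "x \<in> H"
  shows "scale_Zw c x \<in> H"
proof (induction c rule: int_induct[where k = 0])
  case base
  show ?case using assms(1) by (simp add: subgroup_Zw_iff scale_Zw_def zero_fun_def)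
next
  case (step1 i)
  have "scale_Zw (i + 1) x = scale_Zw i x + x"
    by (simp add: scale_Zw_def fun_eq_iff algebra_simps)
  with step1 assms show ?case unfolding subgroup_Zw_iff by metis
next
  case (step2 i)
  have "scale_Zw (i - 1) x = scale_Zw i x + - x"
    by (simp add: scale_Zw_def fun_eq_iff algebra_simps)
  with step2 assms show ?case unfolding subgroup_Zw_iff by metis
qed

lemma subgroup_Zw_imp_subspace: "subgroup_Zw H \<Longrightarrow> Zw.subspace H"
  unfolding Zw.subspace_def using subgroup_Zw_scale by (auto simp: subgroup_Zw_iff)

lemma sum_fun_apply: "(\<Sum>i\<in>A. f i) x = (\<Sum>i\<in>A. f i x)"
  by (induction A rule: infinite_finite_induct) auto

lemma Z_independent_imp_independent: "Z_independent S \<Longrightarrow> Zw.independent S"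
  unfolding Zw.independent_explicit_module Z_independent_def
  by (auto simp: fun_eq_iff sum_fun_apply scale_Zw_def)

theorem mainTheorem3:
  fixes H :: "(nat \<Rightarrow> int) set"
  assumes "subgroup_Zw H" and "countably_infinite_rank H"
  shows "\<exists>f d. endo_Zw f \<and> (\<forall>n. d n > (0::int)) \<and>
           (\<forall>n. (\<lambda>m. d n * unit_vec n m) \<in> f ` H)"
proof -
  obtain S where S: "S \<subseteq> H" "infinite S" "Z_independent S"
    using assms(2) unfolding countably_infinite_rank_def by blast
  obtain h \<phi> where bi: "\<And>n. Zw.biorthogonal_upto H n h \<phi>"
    using Zw.biorthogonal_sequence_exists[OF subgroup_Zw_imp_subspace[OF assms(1)] S(1,2)
        Z_independent_imp_independent[OF S(3)]] by blast
  have h: "h n \<in> H" and \<phi>: "module_hom scale_Zw (*) (\<phi> n)" "\<phi> n (h n) > 0"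
    and off_diagonal: "m \<noteq> n \<Longrightarrow> \<phi> n (h m) = 0" for n m
    using bi[of "Suc (max n m)"] unfolding Zw.biorthogonal_upto_def by auto
  define f where "f x = (\<lambda>n. \<phi> n x)" for x
  have "endo_Zw f"
    unfolding endo_Zw_def f_def using module_hom.add[OF \<phi>(1)] by (simp add: plus_fun_def)
  moreover have "(\<lambda>m. \<phi> n (h n) * unit_vec n m) = f (h n)" for n
    using off_diagonal by (auto simp: f_def unit_vec_def)
  ultimately show ?thesis
    using h \<phi>(2) by (intro exI[of _ f] exI[of _ "\<lambda>n. \<phi> n (h n)"]) blast
qed

end
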